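(* Let $\Gamma=(V,E)$ be a reflexive finite $k$-separable graph such that $\Gamma^-$ is not $k$-faithful. Then: (i) the intersection of two distinct $k$-super-fragments of $\Gamma$ has cardinality less than $k$; (ii) moreover, if $k\ge 2$ and $\kappa_k(\Gamma)=\kappa_{k-1}(\Gamma)$, then the intersection of two distinct $k$-super-fragments of $\Gamma$ has cardinality less than $k-1$.
   Context: A graph is a pair $\Gamma=(V,E)$ with $E\subseteq V\times V$; finite means $V$ finite; reflexive means $(x,x)\in E$ for all $x$. $\Gamma(x)=\{y:(x,y)\in E\}$, $\Gamma(X)=\bigcup_{x\in X}\Gamma(x)$; the reverse graph is $\Gamma^-=(V,E^-)$, $E^-=\{(x,y):(y,x)\in E\}$. $\partial(X)=\Gamma(X)\setminus X$, $\nabla(X)=V\setminus\Gamma(X)$. $\Gamma$ is $k$-separable if there is a finite $X$ with $|X|\ge k$, $|\nabla(X)|\ge k$; then $\kappa_k(\Gamma)=\min\{|\partial(X)|: |X|\ge k,|\nabla(X)|\ge k\}$. A $k$-fragment is a set $X$ with $|X|\ge k$, $|\nabla(X)|\ge k$, $|\partial(X)|=\kappa_k(\Gamma)$; a $k$-atom is a $k$-fragment of minimum cardinality; a $k$-super-fragment is a $k$-fragment of maximum cardinality. A graph is $k$-faithful if $|A|\le|\nabla(A)|$ for a $k$-atom $A$ (all $k$-atoms have the same cardinality); the same notions for $\Gamma^-$ use $\Gamma^-$ in place of $\Gamma$. *)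

theory Defs
  imports Main
begin

text \<open>A graph is a pair (V,E) with E a subset of V \<times> V. The reverse graph uses converse E.\<close>

definition nbr :: "('a \<times> 'a) set \<Rightarrow> 'a set \<Rightarrow> 'a set" where
  "nbr E X = {y. \<exists>x\<in>X. (x, y) \<in> E}"

definition bdry :: "('a \<times> 'a) set \<Rightarrow> 'a set \<Rightarrow> 'a set" where
  "bdry E X = nbr E X - X"

definition nabla :: "'a set \<Rightarrow> ('a \<times> 'a) set \<Rightarrow> 'a set \<Rightarrow> 'a set" where
  "nabla V E X = V - nbr E X"

definition admissible :: "'a set \<Rightarrow> ('a \<times> 'a) set \<Rightarrow> nat \<Rightarrow> 'a set \<Rightarrow> bool" where
  "admissible V E k X \<longleftrightarrow> X \<subseteq> V \<and> finite X \<and> k \<le> card X \<and> k \<le> card (nabla V E X)"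

definition separable :: "'a set \<Rightarrow> ('a \<times> 'a) set \<Rightarrow> nat \<Rightarrow> bool" where
  "separable V E k \<longleftrightarrow> (\<exists>X. admissible V E k X)"

definition kappa :: "'a set \<Rightarrow> ('a \<times> 'a) set \<Rightarrow> nat \<Rightarrow> nat" where
  "kappa V E k = Inf {card (bdry E X) | X. admissible V E k X}"

definition fragment :: "'a set \<Rightarrow> ('a \<times> 'a) set \<Rightarrow> nat \<Rightarrow> 'a set \<Rightarrow> bool" where
  "fragment V E k X \<longleftrightarrow> admissible V E k X \<and> card (bdry E X) = kappa V E k"

definition atom :: "'a set \<Rightarrow> ('a \<times> 'a) set \<Rightarrow> nat \<Rightarrow> 'a set \<Rightarrow> bool" where
  "atom V E k X \<longleftrightarrow> fragment V E k X \<and> (\<forall>Y. fragment V E k Y \<longrightarrow> card X \<le> card Y)"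

definition super_fragment :: "'a set \<Rightarrow> ('a \<times> 'a) set \<Rightarrow> nat \<Rightarrow> 'a set \<Rightarrow> bool" where
  "super_fragment V E k X \<longleftrightarrow> fragment V E k X \<and> (\<forall>Y. fragment V E k Y \<longrightarrow> card Y \<le> card X)"

definition faithful :: "'a set \<Rightarrow> ('a \<times> 'a) set \<Rightarrow> nat \<Rightarrow> bool" where
  "faithful V E k \<longleftrightarrow> (\<forall>A. atom V E k A \<longrightarrow> card A \<le> card (nabla V E A))"

end

theory Submission
  imports Defs
begin

text \<open>
  Passing from X to \<nabla>(X) in the reverse graph \<Gamma>' does not increase the boundary, so \<Gamma> and
  \<Gamma>' have the same k-connectivity and \<nabla> maps k-fragments of \<Gamma> to k-fragments of \<Gamma>'.
  Comparing a fragment X of \<Gamma> with an atom A of \<Gamma>' witnessing non-faithfulness through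
  |V| = |X| + \<kappa> + |\<nabla>(X)| = |A| + \<kappa> + |\<nabla>'(A)| shows |X| < |\<nabla>(X)| for every k-fragment.
  If two distinct super-fragments X, Y met in at least j vertices, where \<kappa>_j = \<kappa>_k and
  j \<in> {k - 1, k}, then X \<inter> Y would be j-admissible, and submodularity of |\<partial>| would make
  X \<union> Y a k-fragment, the inequality |X| < |\<nabla>(X)| guaranteeing |\<nabla>(X \<union> Y)| \<ge> k.
  But X \<union> Y is strictly larger than X.
\<close>

locale reflexive_graph =
  fixes V :: "'a set" and E :: "('a \<times> 'a) set"
  assumes finite_V: "finite V"
    and edges_subset: "E \<subseteq> V \<times> V"
    and reflexive: "\<forall>x\<in>V. (x, x) \<in> E"
begin

lemma nbr_subset: "nbr E Z \<subseteq> V"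
  using edges_subset by (auto simp: nbr_def)

lemma subset_nbr: "Z \<subseteq> V \<Longrightarrow> Z \<subseteq> nbr E Z"
  using reflexive by (auto simp: nbr_def)

lemma finite_nbr: "finite (nbr E Z)"
  using finite_subset[OF nbr_subset finite_V] .

lemma card_nbr_eq: "Z \<subseteq> V \<Longrightarrow> card (nbr E Z) = card Z + card (bdry E Z)"
proof -
  assume "Z \<subseteq> V"
  then have "Z \<subseteq> nbr E Z" by (rule subset_nbr)
  then show ?thesis
    using card_Diff_subset[OF _ \<open>Z \<subseteq> nbr E Z\<close>] card_mono[OF finite_nbr]
      finite_subset[OF _ finite_nbr]
    by (simp add: bdry_def)
qed

lemma card_V_eq: "card V = card (nbr E Z) + card (nabla V E Z)"
  using card_Diff_subset[OF finite_nbr nbr_subset] card_mono[OF finite_V nbr_subset]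
  by (simp add: nabla_def)

lemma card_partition: "Z \<subseteq> V \<Longrightarrow> card Z + card (bdry E Z) + card (nabla V E Z) = card V"
  using card_nbr_eq card_V_eq by metis

lemma card_bdry_submodular:
  assumes "X \<subseteq> V" "Y \<subseteq> V"
  shows "card (bdry E (X \<union> Y)) + card (bdry E (X \<inter> Y)) \<le> card (bdry E X) + card (bdry E Y)"
proof -
  have "nbr E (X \<union> Y) = nbr E X \<union> nbr E Y" by (auto simp: nbr_def)
  moreover have "nbr E (X \<inter> Y) \<subseteq> nbr E X \<inter> nbr E Y" by (auto simp: nbr_def)
  then have "card (nbr E (X \<inter> Y)) \<le> card (nbr E X \<inter> nbr E Y)"
    by (simp add: card_mono finite_nbr)
  ultimately have "card (nbr E (X \<union> Y)) + card (nbr E (X \<inter> Y)) \<le> card (nbr E X) + card (nbr E Y)"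
    using card_Un_Int[OF finite_nbr finite_nbr] by simp
  moreover have "card (X \<union> Y) + card (X \<inter> Y) = card X + card Y"
    using assms finite_V by (metis card_Un_Int finite_subset)
  moreover have "X \<union> Y \<subseteq> V" "X \<inter> Y \<subseteq> V" using assms by auto
  ultimately show ?thesis
    using card_nbr_eq[OF assms(1)] card_nbr_eq[OF assms(2)]
      card_nbr_eq[of "X \<union> Y"] card_nbr_eq[of "X \<inter> Y"]
    by simp
qed

lemma nabla_antimono: "X \<subseteq> Y \<Longrightarrow> nabla V E Y \<subseteq> nabla V E X"
  by (auto simp: nabla_def nbr_def)

lemma admissible_Int:
  assumes "admissible V E k X" "j \<le> k" "j \<le> card (X \<inter> Y)"
  shows "admissible V E j (X \<inter> Y)"
proof -
  have "card (nabla V E X) \<le> card (nabla V E (X \<inter> Y))"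
    using nabla_antimono[of "X \<inter> Y" X] finite_V by (intro card_mono) (auto simp: nabla_def)
  then show ?thesis using assms by (auto simp: admissible_def)
qed

lemma kappa_le: "admissible V E k X \<Longrightarrow> kappa V E k \<le> card (bdry E X)"
  unfolding kappa_def by (rule cInf_lower) auto

lemma fragment_exists: "separable V E k \<Longrightarrow> \<exists>X. fragment V E k X"
proof -
  assume "separable V E k"
  then have "{card (bdry E X) | X. admissible V E k X} \<noteq> {}" by (auto simp: separable_def)
  from Inf_nat_def1[OF this] show ?thesis by (auto simp: kappa_def fragment_def)
qed

lemma reflexive_graph_converse: "reflexive_graph V (converse E)"
  using finite_V edges_subset reflexive by unfold_locales auto

lemma nabla_admissible_converse:
  assumes "admissible V E k X"
  shows "admissible V (converse E) k (nabla V E X)"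
proof -
  have "X \<subseteq> nabla V (converse E) (nabla V E X)"
    using assms by (auto simp: admissible_def nbr_def nabla_def)
  then have "card X \<le> card (nabla V (converse E) (nabla V E X))"
    by (rule card_mono[rotated]) (simp add: nabla_def finite_V)
  then show ?thesis using assms finite_V by (auto simp: admissible_def nabla_def)
qed

text \<open>The reverse-graph neighbourhood of \<nabla>(X) avoids X, while |\<nabla>(X)| = |V| - |\<Gamma>(X)|.\<close>

lemma card_bdry_converse_nabla_le:
  assumes "X \<subseteq> V"
  shows "card (bdry (converse E) (nabla V E X)) \<le> card (bdry E X)"
proof -
  interpret rev: reflexive_graph V "converse E" by (rule reflexive_graph_converse)
  have "nbr (converse E) (nabla V E X) \<subseteq> V - X"
    using edges_subset by (auto simp: nbr_def nabla_def)
  then have "card (nbr (converse E) (nabla V E X)) \<le> card V - card X"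
    using assms finite_V by (metis card_Diff_subset card_mono finite_Diff finite_subset)
  then show ?thesis
    using assms card_partition[of X] rev.card_nbr_eq[of "nabla V E X"]
    by (simp add: nabla_def)
qed

lemma separable_converse: "separable V E k \<Longrightarrow> separable V (converse E) k"
  using nabla_admissible_converse by (auto simp: separable_def)

lemma kappa_converse_le: "separable V E k \<Longrightarrow> kappa V (converse E) k \<le> kappa V E k"
proof -
  assume "separable V E k"
  then obtain X where X: "fragment V E k X" using fragment_exists by blast
  then have "admissible V E k X" "X \<subseteq> V" by (auto simp: fragment_def admissible_def)
  then have "kappa V (converse E) k \<le> card (bdry E X)"
    using reflexive_graph.kappa_le[OF reflexive_graph_converse nabla_admissible_converse]
      card_bdry_converse_nabla_le le_trans
    by blast
  then show ?thesis using X by (simp add: fragment_def)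
qed

lemma kappa_converse:
  assumes "separable V E k"
  shows "kappa V (converse E) k = kappa V E k"
proof -
  have "kappa V (converse (converse E)) k \<le> kappa V (converse E) k"
    using reflexive_graph.kappa_converse_le[OF reflexive_graph_converse separable_converse[OF assms]] .
  then show ?thesis using kappa_converse_le[OF assms] by simp
qed

lemma fragment_nabla_converse:
  assumes "fragment V E k X"
  shows "fragment V (converse E) k (nabla V E X)"
proof -
  have X: "admissible V E k X" "X \<subseteq> V" using assms by (auto simp: fragment_def admissible_def)
  then have "kappa V (converse E) k = kappa V E k"
    using kappa_converse by (auto simp: separable_def)
  moreover have "kappa V (converse E) k \<le> card (bdry (converse E) (nabla V E X))"
    using reflexive_graph.kappa_le[OF reflexive_graph_converse nabla_admissible_converse[OF X(1)]] .
  ultimately show ?thesis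
    using assms card_bdry_converse_nabla_le[OF X(2)] nabla_admissible_converse[OF X(1)]
    by (simp add: fragment_def)
qed

lemma fragment_card_less_nabla:
  assumes "\<not> faithful V (converse E) k" and X: "fragment V E k X"
  shows "card X < card (nabla V E X)"
proof -
  interpret rev: reflexive_graph V "converse E" by (rule reflexive_graph_converse)
  obtain A where A: "atom V (converse E) k A" "card (nabla V (converse E) A) < card A"
    using assms(1) unfolding faithful_def by force
  have "card A \<le> card (nabla V E X)"
    using A(1) fragment_nabla_converse[OF X] by (simp add: atom_def)
  moreover have "separable V E k" using X by (auto simp: fragment_def separable_def)
  then have "card (bdry (converse E) A) = card (bdry E X)"
    using A(1) X kappa_converse by (simp add: atom_def fragment_def)
  moreover have "X \<subseteq> V" "A \<subseteq> V"
    using A(1) X by (auto simp: atom_def fragment_def admissible_def)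
  ultimately show ?thesis
    using A(2) card_partition[of X] rev.card_partition[of A] by linarith
qed

lemma super_fragments_card_Int_less:
  assumes "j \<le> k" "k \<le> j + 1" "kappa V E j = kappa V E k"
    and X: "super_fragment V E k X" and Y: "super_fragment V E k Y" and "X \<noteq> Y"
    and small: "card X < card (nabla V E X)"
  shows "card (X \<inter> Y) < j"
proof (rule ccontr)
  assume "\<not> card (X \<inter> Y) < j"
  then have big: "j \<le> card (X \<inter> Y)" by simp
  have fX: "fragment V E k X" and fY: "fragment V E k Y"
    using X Y by (auto simp: super_fragment_def)
  then have aX: "admissible V E k X" and bX: "card (bdry E X) = kappa V E k"
    and bY: "card (bdry E Y) = kappa V E k"
    by (auto simp: fragment_def)
  have XV: "X \<subseteq> V" "finite X" and YV: "Y \<subseteq> V" "finite Y"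
    using fX fY by (auto simp: fragment_def admissible_def)
  have UV: "X \<union> Y \<subseteq> V" using XV YV by simp
  have same_card: "card X = card Y"
    using X Y fX fY unfolding super_fragment_def by (meson le_antisym)
  then have "\<not> Y \<subseteq> X" using \<open>X \<noteq> Y\<close> card_subset_eq[OF XV(2), of Y] by auto
  then have larger: "card X < card (X \<union> Y)"
    using XV YV by (intro psubset_card_mono) auto
  have "kappa V E k \<le> card (bdry E (X \<inter> Y))"
    using kappa_le[OF admissible_Int[OF aX assms(1) big]] assms(3) by simp
  then have bU: "card (bdry E (X \<union> Y)) \<le> kappa V E k"
    using card_bdry_submodular[OF XV(1) YV(1)] bX bY by linarith
  have "card (X \<union> Y) + card (X \<inter> Y) = card X + card Y"
    using card_Un_Int[OF XV(2) YV(2)] by simp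
  then have "k \<le> card (nabla V E (X \<union> Y))"
    using card_partition[OF XV(1)] card_partition[OF UV] bX bU small same_card big assms(2)
    by linarith
  then have "admissible V E k (X \<union> Y)"
    using aX UV larger finite_subset[OF UV finite_V] by (simp add: admissible_def)
  then have "fragment V E k (X \<union> Y)"
    using bU kappa_le[of k "X \<union> Y"] by (simp add: fragment_def)
  then have "card (X \<union> Y) \<le> card X" using X by (simp add: super_fragment_def)
  then show False using larger by simp
qed

end

theorem theorem4p3:
  fixes V :: "'a set" and E :: "('a \<times> 'a) set" and k :: nat
  assumes "finite V"
    and "E \<subseteq> V \<times> V"
    and "\<forall>x\<in>V. (x, x) \<in> E"
    and "separable V E k"
    and "\<not> faithful V (converse E) k"
  shows "(\<forall>X Y. super_fragment V E k X \<and> super_fragment V E k Y \<and> X \<noteq> Y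
              \<longrightarrow> card (X \<inter> Y) < k)
       \<and> (k \<ge> 2 \<and> kappa V E k = kappa V E (k - 1) \<longrightarrow>
           (\<forall>X Y. super_fragment V E k X \<and> super_fragment V E k Y \<and> X \<noteq> Y
              \<longrightarrow> card (X \<inter> Y) < k - 1))"
proof -
  interpret reflexive_graph V E using assms(1-3) by unfold_locales
  have small: "card X < card (nabla V E X)" if "super_fragment V E k X" for X
    using fragment_card_less_nabla[OF assms(5)] that by (simp add: super_fragment_def)
  show ?thesis
  proof (intro conjI allI impI; elim conjE)
    fix X Y assume X: "super_fragment V E k X" and "super_fragment V E k Y" "X \<noteq> Y"
    then show "card (X \<inter> Y) < k"
      using super_fragments_card_Int_less[of k k, OF _ _ _ X _ _ small[OF X]] by simp
  next
    fix X Y assume X: "super_fragment V E k X" and "super_fragment V E k Y" "X \<noteq> Y"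
      and "2 \<le> k" "kappa V E k = kappa V E (k - 1)"
    then show "card (X \<inter> Y) < k - 1"
      using super_fragments_card_Int_less[of "k - 1" k, OF _ _ _ X _ _ small[OF X]] by simp
  qed
qed

end
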